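(* Let $n\geqslant 2$. For any integers $p_1,p_2$ with $2 \leqslant p_1 < p_2$ and any $\varepsilon \in (0,1)$, $\mathcal Y(\varepsilon,p_2) \subset \mathcal Y(\varepsilon,p_1)$ (proper inclusion).
   Context: For $\bm x \in \mathbb{R}^n_{\geqslant 0}$ and $p\geqslant 1$, $\|\bm x\|_p = (\sum_{i=1}^n x_i^p)^{1/p}$. Define $D_p = n^{1-1/p}-1$. Let $\Delta_n = \{\bm x \in \mathbb{R}^n_{\geqslant 0} : \sum_{i=1}^n x_i = 1\}$, and for $\varepsilon\in[0,1]$ and integer $p\geqslant 2$ let $\mathcal Y(\varepsilon,p) = \{\bm x \in \Delta_n : (1+\varepsilon D_p)\|\bm x\|_p \leqslant 1\}$. *)

theory Defs
  imports "HOL-Analysis.Analysis"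
begin

definition pnorm :: "nat \<Rightarrow> real^'n \<Rightarrow> real" where
  "pnorm p x = (\<Sum>i\<in>UNIV. (x $ i) ^ p) powr (1 / real p)"

definition Dp :: "'n::finite itself \<Rightarrow> nat \<Rightarrow> real" where
  "Dp _ p = real CARD('n) powr (1 - 1 / real p) - 1"

definition prob_simplex :: "(real^'n::finite) set" where
  "prob_simplex = {x. (\<forall>i. x $ i \<ge> 0) \<and> (\<Sum>i\<in>UNIV. x $ i) = 1}"

definition Yset :: "real \<Rightarrow> nat \<Rightarrow> (real^'n::finite) set" where
  "Yset \<epsilon> p = {x \<in> prob_simplex. (1 + \<epsilon> * Dp TYPE('n) p) * pnorm p x \<le> 1}"

end

theory Submission
  imports Defs
begin

text \<open>On the simplex, Jensen's inequality for a concave power gives the interpolation bound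
  \<open>\<parallel>x\<parallel>\<^sub>p\<^sub>1 \<le> \<parallel>x\<parallel>\<^sub>p\<^sub>2 ^ q\<close> with \<open>q = (p1 - 1) p2 / (p1 (p2 - 1)) \<in> (0, 1)\<close>. Since
  \<open>1 - 1/p1 = q (1 - 1/p2)\<close>, we have \<open>1 + \<epsilon> D\<^sub>p\<^sub>1 = (1 - \<epsilon>) + \<epsilon> (n\<^bsup>1 - 1/p2\<^esup>)\<^sup>q\<close>, and strict
  concavity of \<open>t \<mapsto> t\<^sup>q\<close> yields \<open>1 + \<epsilon> D\<^sub>p\<^sub>1 < (1 + \<epsilon> D\<^sub>p\<^sub>2)\<^sup>q\<close>; together with the interpolation
  bound this gives the inclusion. For properness, take a point of the simplex whose \<open>p2\<close>-norm
  \<open>c\<close> satisfies \<open>c\<^sup>q = 1 / (1 + \<epsilon> D\<^sub>p\<^sub>1)\<close>: interpolation puts it into \<open>Y(\<epsilon>, p1)\<close>, while the strict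
  inequality says \<open>c > 1 / (1 + \<epsilon> D\<^sub>p\<^sub>2)\<close>.\<close>

lemma powr_le_tangent_line:
  fixes t q :: real
  assumes "0 \<le> t" "0 \<le> q" "q \<le> 1"
  shows "t powr q \<le> 1 + q * (t - 1)"
proof (cases "t = 0")
  case False
  then have "t powr q * 1 powr (1 - q) \<le> q * t + (1 - q) * 1"
    using Youngs_inequality_0[of q "1 - q" t 1] assms by simp
  then show ?thesis by (simp add: algebra_simps)
qed (use assms in simp)

text \<open>Apply the weak bound to \<open>sqrt t\<close> and square: squaring the right-hand side
  loses exactly \<open>q * (1 - q) * (sqrt t - 1)\<^sup>2 > 0\<close>.\<close>

lemma powr_less_tangent_line:
  fixes t q :: real
  assumes "0 < t" "t \<noteq> 1" "0 < q" "q < 1"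
  shows "t powr q < 1 + q * (t - 1)"
proof -
  define u where "u = sqrt t"
  have u: "0 < u" "u \<noteq> 1" "t = u * u"
    using assms by (auto simp: u_def)
  have "0 < q * u"
    using u assms by simp
  then have tangent_nonneg: "0 \<le> 1 + q * (u - 1)"
    using assms by (simp add: algebra_simps)
  have "t powr q = u powr q * u powr q"
    using u by (simp add: powr_mult)
  also have "\<dots> \<le> (1 + q * (u - 1)) * (1 + q * (u - 1))"
    using powr_le_tangent_line[of u q] u assms tangent_nonneg by (intro mult_mono) auto
  also have "\<dots> = 1 + q * (t - 1) - q * (1 - q) * (u - 1)\<^sup>2"
    using u by (simp add: algebra_simps power2_eq_square)
  also have "\<dots> < 1 + q * (t - 1)"
    using u assms by simp
  finally show ?thesis .
qed

lemma powr_strictly_concave: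
  fixes a x y q :: real
  assumes "0 < a" "a < 1" "0 < x" "0 < y" "x \<noteq> y" "0 < q" "q < 1"
  shows "(1 - a) * x powr q + a * y powr q < ((1 - a) * x + a * y) powr q"
proof -
  define m where "m = (1 - a) * x + a * y"
  have m: "0 < m"
    using assms by (simp add: m_def add_pos_pos)
  have "m - y = (1 - a) * (x - y)"
    by (simp add: m_def algebra_simps)
  then have "y \<noteq> m"
    using assms by auto
  then have "y / m \<noteq> 1"
    using m by simp
  then have "(1 - a) * (x / m) powr q + a * (y / m) powr q
      < (1 - a) * (1 + q * (x / m - 1)) + a * (1 + q * (y / m - 1))"
    using powr_le_tangent_line[of "x / m" q] powr_less_tangent_line[of "y / m" q] assms m
    by (intro add_le_less_mono mult_left_mono mult_strict_left_mono) auto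
  also have "\<dots> = 1 + q * (((1 - a) * x + a * y) / m - 1)"
    using m by (simp add: field_simps)
  also have "\<dots> = 1"
    using m by (simp flip: m_def)
  finally have "((1 - a) * x powr q + a * y powr q) / m powr q < 1"
    using assms m by (simp add: powr_divide add_divide_distrib)
  then show ?thesis
    using m by (simp add: m_def)
qed

lemma weighted_sum_powr_le_powr_weighted_sum:
  fixes w y :: "'a \<Rightarrow> real"
  assumes "\<And>i. i \<in> I \<Longrightarrow> 0 \<le> w i" "sum w I = 1"
    and "\<And>i. i \<in> I \<Longrightarrow> 0 \<le> y i" "0 \<le> r" "r \<le> 1"
  shows "(\<Sum>i\<in>I. w i * y i powr r) \<le> (\<Sum>i\<in>I. w i * y i) powr r"
proof -
  define m where "m = (\<Sum>i\<in>I. w i * y i)"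
  have "0 \<le> m"
    unfolding m_def using assms by (auto intro: sum_nonneg)
  show ?thesis
  proof (cases "m = 0")
    case True
    then have "\<forall>i\<in>I. w i * y i = 0"
      using assms sum_nonneg_eq_0_iff[of I "\<lambda>i. w i * y i"] \<open>sum w I = 1\<close>
      unfolding m_def by (metis mult_nonneg_nonneg sum.infinite zero_neq_one)
    then have "(\<Sum>i\<in>I. w i * y i powr r) = 0"
      by (intro sum.neutral) auto
    then show ?thesis
      by simp
  next
    case False
    with \<open>0 \<le> m\<close> have "0 < m" by simp
    have "(\<Sum>i\<in>I. w i * y i powr r) \<le> (\<Sum>i\<in>I. w i * (m powr r * (1 + r * (y i / m - 1))))"
    proof (intro sum_mono mult_left_mono)
      fix i assume i: "i \<in> I"
      have "y i powr r = m powr r * (y i / m) powr r"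
        using \<open>0 < m\<close> assms(3)[OF i] by (simp add: powr_divide)
      also have "\<dots> \<le> m powr r * (1 + r * (y i / m - 1))"
        using powr_le_tangent_line[of "y i / m" r] assms(3)[OF i] assms \<open>0 < m\<close>
        by (intro mult_left_mono) auto
      finally show "y i powr r \<le> m powr r * (1 + r * (y i / m - 1))" .
    qed (use assms in auto)
    also have "\<dots> = m powr r * ((1 - r) * sum w I + r / m * (\<Sum>i\<in>I. w i * y i))"
      by (simp add: sum_distrib_left sum_distrib_right sum.distrib sum_subtractf algebra_simps
          diff_divide_distrib flip: sum_divide_distrib)
    also have "\<dots> = m powr r"
      using assms \<open>0 < m\<close> by (simp flip: m_def)
    finally show ?thesis
      unfolding m_def .
  qed
qed

definition interpolation_exponent :: "nat \<Rightarrow> nat \<Rightarrow> real" where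
  "interpolation_exponent p1 p2 = (real p1 - 1) * real p2 / (real p1 * (real p2 - 1))"

lemma interpolation_exponent_gt_0: "1 < p1 \<Longrightarrow> p1 < p2 \<Longrightarrow> 0 < interpolation_exponent p1 p2"
  by (simp add: interpolation_exponent_def)

lemma interpolation_exponent_less_1: "0 < p1 \<Longrightarrow> p1 < p2 \<Longrightarrow> interpolation_exponent p1 p2 < 1"
  by (simp add: interpolation_exponent_def field_simps)

lemma one_minus_inverse_mult_interpolation_exponent:
  "0 < p1 \<Longrightarrow> p1 < p2 \<Longrightarrow> (1 - 1 / real p2) * interpolation_exponent p1 p2 = 1 - 1 / real p1"
  by (simp add: interpolation_exponent_def field_simps)

text \<open>Jensen for \<open>t \<mapsto> t powr r\<close> with the weights \<open>x $ i\<close> at the points \<open>x $ i ^ (p2 - 1)\<close>: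
  both sides then become power sums.\<close>

lemma pnorm_le_pnorm_powr:
  fixes x :: "real^'n::finite"
  assumes "x \<in> prob_simplex" "1 \<le> p1" "p1 < p2"
  shows "pnorm p1 x \<le> pnorm p2 x powr interpolation_exponent p1 p2"
proof -
  define q where "q = interpolation_exponent p1 p2"
  define r where "r = (real p1 - 1) / (real p2 - 1)"
  have r: "0 \<le> r" "r \<le> 1"
    using assms unfolding r_def by auto
  have x_nonneg: "\<And>i. 0 \<le> x $ i" and x_sum: "(\<Sum>i\<in>UNIV. x $ i) = 1"
    using assms(1) unfolding prob_simplex_def by auto
  have power_p1: "x $ i * (x $ i ^ (p2 - 1)) powr r = x $ i ^ p1" for i
  proof (cases "x $ i = 0")
    case False
    then have "0 < x $ i"
      using x_nonneg[of i] by simp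
    have "real (p2 - 1) * r = real (p1 - 1)"
      using assms unfolding r_def by simp
    then have "(x $ i ^ (p2 - 1)) powr r = x $ i ^ (p1 - 1)"
      using \<open>0 < x $ i\<close> by (simp add: powr_powr flip: powr_realpow)
    then show ?thesis
      using assms by (simp flip: power_Suc)
  qed (use assms in simp)
  have power_p2: "x $ i * x $ i ^ (p2 - 1) = x $ i ^ p2" for i
    using assms by (simp flip: power_Suc)
  have exponent: "r / real p1 = q / real p2"
    using assms unfolding r_def q_def interpolation_exponent_def by (simp add: field_simps)
  have "(\<Sum>i\<in>UNIV. x $ i * (x $ i ^ (p2 - 1)) powr r)
      \<le> (\<Sum>i\<in>UNIV. x $ i * x $ i ^ (p2 - 1)) powr r"
    by (rule weighted_sum_powr_le_powr_weighted_sum) (use x_nonneg x_sum r in auto)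
  then have "pnorm p1 x \<le> ((\<Sum>i\<in>UNIV. x $ i ^ p2) powr r) powr (1 / real p1)"
    unfolding pnorm_def power_p1 power_p2 using x_nonneg by (intro powr_mono2 sum_nonneg) auto
  also have "\<dots> = pnorm p2 x powr q"
    unfolding pnorm_def by (simp add: powr_powr exponent)
  finally show ?thesis
    unfolding q_def .
qed

lemma Dp_nonneg: "0 \<le> Dp TYPE('n::finite) p"
proof -
  have "1 \<le> real CARD('n)"
    by simp
  moreover have "0 \<le> 1 - 1 / real p"
    by (cases p) auto
  ultimately show ?thesis
    unfolding Dp_def using ge_one_powr_ge_zero by simp
qed

lemma one_le_one_plus_Dp: "0 \<le> \<epsilon> \<Longrightarrow> 1 \<le> 1 + \<epsilon> * Dp TYPE('n::finite) p"
  by (simp add: Dp_nonneg)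

lemma one_plus_Dp_le_card_powr:
  assumes "\<epsilon> \<le> 1"
  shows "1 + \<epsilon> * Dp TYPE('n::finite) p \<le> real CARD('n) powr (1 - 1 / real p)"
proof -
  have "\<epsilon> * Dp TYPE('n) p \<le> Dp TYPE('n) p"
    using mult_right_mono[OF assms Dp_nonneg[where 'n='n, of p]] by simp
  then show ?thesis
    by (simp add: Dp_def)
qed

lemma one_plus_Dp_less_powr:
  assumes "CARD('n::finite) \<ge> 2" "2 \<le> p1" "p1 < p2" "0 < \<epsilon>" "\<epsilon> < 1"
  shows "1 + \<epsilon> * Dp TYPE('n) p1 < (1 + \<epsilon> * Dp TYPE('n) p2) powr interpolation_exponent p1 p2"
proof -
  define q where "q = interpolation_exponent p1 p2"
  define b where "b = real CARD('n) powr (1 - 1 / real p2)"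
  have q: "0 < q" "q < 1"
    using assms interpolation_exponent_gt_0 interpolation_exponent_less_1 unfolding q_def by simp_all
  have "1 < b"
    using assms unfolding b_def by (simp add: field_simps)
  have "b powr q = real CARD('n) powr (1 - 1 / real p1)"
    using one_minus_inverse_mult_interpolation_exponent[of p1 p2] assms
    unfolding b_def q_def by (simp add: powr_powr)
  then have "1 + \<epsilon> * Dp TYPE('n) p1 = (1 - \<epsilon>) * 1 powr q + \<epsilon> * b powr q"
    unfolding Dp_def by (simp add: algebra_simps)
  also have "\<dots> < ((1 - \<epsilon>) * 1 + \<epsilon> * b) powr q"
    using powr_strictly_concave[of \<epsilon> 1 b q] assms q \<open>1 < b\<close> by simp
  also have "\<dots> = (1 + \<epsilon> * Dp TYPE('n) p2) powr q"
    unfolding Dp_def b_def by (simp add: algebra_simps)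
  finally show ?thesis
    unfolding q_def .
qed

lemma mem_Yset_iff:
  fixes x :: "real^'n::finite"
  assumes "0 \<le> \<epsilon>"
  shows "x \<in> Yset \<epsilon> p \<longleftrightarrow> x \<in> prob_simplex \<and> pnorm p x \<le> 1 / (1 + \<epsilon> * Dp TYPE('n) p)"
proof -
  have "0 < 1 + \<epsilon> * Dp TYPE('n) p"
    using one_le_one_plus_Dp[where 'n='n, OF assms, of p] by linarith
  then show ?thesis
    by (simp add: Yset_def field_simps)
qed

lemma Yset_subset:
  assumes "CARD('n::finite) \<ge> 2" "2 \<le> p1" "p1 < p2" "0 < \<epsilon>" "\<epsilon> < 1"
  shows "(Yset \<epsilon> p2 :: (real^'n) set) \<subseteq> Yset \<epsilon> p1"
proof
  define q where "q = interpolation_exponent p1 p2"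
  fix x :: "real^'n"
  assume "x \<in> Yset \<epsilon> p2"
  then have "x \<in> prob_simplex" and "pnorm p2 x \<le> 1 / (1 + \<epsilon> * Dp TYPE('n) p2)"
    using assms by (simp_all add: mem_Yset_iff)
  have "pnorm p1 x \<le> pnorm p2 x powr q"
    using pnorm_le_pnorm_powr[OF \<open>x \<in> prob_simplex\<close>] assms unfolding q_def by simp
  also have "\<dots> \<le> (1 / (1 + \<epsilon> * Dp TYPE('n) p2)) powr q"
    using \<open>pnorm p2 x \<le> _\<close> interpolation_exponent_gt_0[of p1 p2] assms
    by (intro powr_mono2) (auto simp: pnorm_def q_def)
  also have "\<dots> = 1 / (1 + \<epsilon> * Dp TYPE('n) p2) powr q"
    using one_le_one_plus_Dp[where 'n='n, of \<epsilon> p2] assms by (simp add: powr_divide)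
  also have "\<dots> < 1 / (1 + \<epsilon> * Dp TYPE('n) p1)"
    using one_plus_Dp_less_powr[OF assms] one_le_one_plus_Dp[where 'n='n, of \<epsilon> p1] assms
    by (intro divide_strict_left_mono mult_pos_pos) (auto simp: q_def)
  finally show "x \<in> Yset \<epsilon> p1"
    using \<open>x \<in> prob_simplex\<close> assms by (simp add: mem_Yset_iff)
qed

text \<open>Along the segment from the barycentre to a vertex, \<open>\<Sum>i. x $ i ^ p\<close> runs
  continuously from \<open>d powr (1 - p)\<close> to \<open>1\<close>.\<close>

lemma pnorm_attains_value_on_prob_simplex:
  assumes "1 \<le> p" "real CARD('n::finite) powr (1 / real p - 1) \<le> c" "c \<le> 1"
  shows "\<exists>x \<in> (prob_simplex :: (real^'n) set). pnorm p x = c"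
proof -
  define d where "d = real CARD('n)"
  fix i0 :: 'n
  define v :: "real \<Rightarrow> real^'n"
    where "v l = (\<chi> i. (1 - l) / d + l * of_bool (i = i0))" for l
  define f where "f l = (\<Sum>i\<in>UNIV. v l $ i ^ p)" for l
  have "1 \<le> d"
    unfolding d_def by simp
  have "0 < c"
    by (rule less_le_trans[OF _ assms(2)]) simp
  have v_simplex: "v l \<in> prob_simplex" if "0 \<le> l" "l \<le> 1" for l
    using that \<open>1 \<le> d\<close> by (simp add: prob_simplex_def v_def sum.distrib d_def)
  have "continuous_on {0..1} f"
    unfolding f_def v_def using \<open>1 \<le> d\<close> by (intro continuous_intros) auto
  have "(1 / real p - 1) * real p = 1 - real p"
    using assms by (simp add: field_simps)
  have "f 0 = d powr (1 - real p)"
    using \<open>1 \<le> d\<close> by (simp add: f_def v_def d_def powr_diff powr_realpow power_one_over)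
  also have "\<dots> = (d powr (1 / real p - 1)) powr real p"
    using \<open>(1 / real p - 1) * real p = 1 - real p\<close> by (simp add: powr_powr)
  also have "\<dots> \<le> c powr real p"
    using assms by (intro powr_mono2) (auto simp: d_def)
  also have "\<dots> = c ^ p"
    using \<open>0 < c\<close> by (simp add: powr_realpow)
  finally have "f 0 \<le> c ^ p" .
  moreover have "f 1 = 1"
  proof -
    have "of_bool b ^ p = (of_bool b :: real)" for b
      using assms by (cases b) auto
    then show ?thesis
      by (simp add: f_def v_def)
  qed
  moreover have "c ^ p \<le> 1"
    using assms \<open>0 < c\<close> by (simp add: power_le_one)
  ultimately obtain l where l: "0 \<le> l" "l \<le> 1" "f l = c ^ p"
    using IVT'[of f 0 "c ^ p" 1] \<open>continuous_on {0..1} f\<close> by auto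
  have "pnorm p (v l) = (c ^ p) powr (1 / real p)"
    unfolding pnorm_def using l(3) by (simp add: f_def)
  also have "\<dots> = c"
    using \<open>0 < c\<close> assms by (simp add: powr_powr flip: powr_realpow)
  finally show ?thesis
    using v_simplex l by blast
qed

lemma Yset_not_subset:
  assumes "CARD('n::finite) \<ge> 2" "2 \<le> p1" "p1 < p2" "0 < \<epsilon>" "\<epsilon> < 1"
  shows "\<not> (Yset \<epsilon> p1 :: (real^'n) set) \<subseteq> Yset \<epsilon> p2"
proof -
  define d where "d = real CARD('n)"
  define q where "q = interpolation_exponent p1 p2"
  define A1 where "A1 = 1 + \<epsilon> * Dp TYPE('n) p1"
  define A2 where "A2 = 1 + \<epsilon> * Dp TYPE('n) p2"
  define c where "c = (1 / A1) powr (1 / q)"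
  have "1 \<le> A1" "0 < A2"
    using one_le_one_plus_Dp[where 'n='n, of \<epsilon>] assms unfolding A1_def A2_def
    by (auto intro: order.strict_trans2[OF zero_less_one])
  have q: "0 < q" "q < 1"
    using assms interpolation_exponent_gt_0 interpolation_exponent_less_1 unfolding q_def by simp_all
  have "c powr q = 1 / A1"
    using \<open>1 \<le> A1\<close> q by (simp add: c_def powr_powr)
  have "(1 / A2) powr q < 1 / A1"
    using one_plus_Dp_less_powr[OF assms] \<open>1 \<le> A1\<close> \<open>0 < A2\<close>
    by (simp add: powr_divide A1_def A2_def q_def divide_strict_left_mono)
  then have "1 / A2 < c"
    using powr_less_mono2[of "1 / q" "(1 / A2) powr q" "1 / A1"] \<open>0 < A2\<close> q
    by (simp add: c_def powr_powr)
  have "c \<le> 1"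
    using \<open>1 \<le> A1\<close> q powr_mono2[of "1 / q" "1 / A1" 1] by (simp add: c_def)
  have "(1 - 1 / real p1) * (1 / q) = 1 - 1 / real p2"
    using one_minus_inverse_mult_interpolation_exponent[of p1 p2] assms q by (simp add: q_def field_simps)
  have "1 / d powr (1 - 1 / real p1) \<le> 1 / A1"
    using one_plus_Dp_le_card_powr[where 'n='n, of \<epsilon> p1] \<open>1 \<le> A1\<close> assms
    by (intro divide_left_mono mult_pos_pos) (auto simp: A1_def d_def)
  then have "(1 / d powr (1 - 1 / real p1)) powr (1 / q) \<le> c"
    using q by (simp add: c_def powr_mono2)
  moreover have "(1 / d powr (1 - 1 / real p1)) powr (1 / q) = 1 / d powr (1 - 1 / real p2)"
    using \<open>(1 - 1 / real p1) * (1 / q) = 1 - 1 / real p2\<close> by (simp add: powr_divide powr_powr)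
  ultimately have "1 / d powr (1 - 1 / real p2) \<le> c"
    by simp
  then have "d powr (1 / real p2 - 1) \<le> c"
    using powr_minus_divide[of d "1 - 1 / real p2"] by simp
  then obtain x where "x \<in> (prob_simplex :: (real^'n) set)" "pnorm p2 x = c"
    using pnorm_attains_value_on_prob_simplex[of p2 c] \<open>c \<le> 1\<close> assms by (auto simp: d_def)
  have "pnorm p1 x \<le> 1 / A1"
    using pnorm_le_pnorm_powr[OF \<open>x \<in> prob_simplex\<close>, of p1 p2] assms \<open>pnorm p2 x = c\<close>
      \<open>c powr q = 1 / A1\<close> by (simp add: q_def)
  moreover have "\<not> pnorm p2 x \<le> 1 / A2"
    using \<open>pnorm p2 x = c\<close> \<open>1 / A2 < c\<close> by simp
  ultimately have "x \<in> Yset \<epsilon> p1" "x \<notin> Yset \<epsilon> p2"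
    using \<open>x \<in> prob_simplex\<close> assms unfolding A1_def A2_def by (simp_all add: mem_Yset_iff)
  then show ?thesis
    by blast
qed

theorem theorem2:
  fixes p1 p2 :: nat and \<epsilon> :: real
  assumes "CARD('n::finite) \<ge> 2"
    and "2 \<le> p1" and "p1 < p2"
    and "0 < \<epsilon>" and "\<epsilon> < 1"
  shows "(Yset \<epsilon> p2 :: (real^'n) set) \<subset> Yset \<epsilon> p1"
  using Yset_subset[OF assms] Yset_not_subset[OF assms] by blast

end
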